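(* Suppose there exist two orthogonal designs of order $n$ and type $(s_1,\ldots,s_u)$ (in the same variables) that are unbiased with parameter $\alpha$. Then for any nonempty subset $S\subseteq\{1,\ldots,u\}$ there exist two weighing matrices that are quasi-unbiased for the parameters $\left(n,\sum_{i\in S}s_i,\alpha,(\sum_{i\in S}s_i)^2/\alpha\right)$.
   Context: A weighing matrix of order $n$ and weight $k$ is an $n\times n$ $(0,1,-1)$-matrix $W$ with $WW^\top=kI_n$. An orthogonal design of order $n$ and type $(s_1,\ldots,s_u)$ in distinct commuting real indeterminates $x_1,\ldots,x_u$ is an $n\times n$ matrix $D$ with entries in $\{0,\pm x_1,\ldots,\pm x_u\}$ such that $DD^\top=(s_1x_1^2+\cdots+s_ux_u^2)I_n$. Two such designs $D_1,D_2$ are unbiased with parameter $\alpha$ if $\alpha>0$ and there is a $(0,1,-1)$-matrix $W$ with $D_1D_2^\top=\frac{s_1x_1^2+\cdots+s_ux_u^2}{\sqrt\alpha}W$. Weighing matrices $W_1,W_2$ of order $n$ and weight $k$ are quasi-unbiased for parameters $(n,k,l,a)$ if $\frac1{\sqrt a}W_1W_2^\top$ is a weighing matrix of order $n$ and weight $l$. *)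

theory Defs
  imports "HOL-Analysis.Analysis"
begin

definition pm_matrix :: "real^'n^'n \<Rightarrow> bool" where
  "pm_matrix W \<longleftrightarrow> (\<forall>i j. W $ i $ j \<in> {0, 1, -1})"

definition weighing_matrix :: "real \<Rightarrow> real^'n^'n \<Rightarrow> bool" where
  "weighing_matrix k W \<longleftrightarrow> pm_matrix W \<and> W ** transpose W = k *\<^sub>R mat 1"

definition quasi_unbiased :: "real \<Rightarrow> real \<Rightarrow> real \<Rightarrow> real^'n^'n \<Rightarrow> real^'n^'n \<Rightarrow> bool" where
  "quasi_unbiased k l a W1 W2 \<longleftrightarrow>
     weighing_matrix k W1 \<and> weighing_matrix k W2 \<and>
     weighing_matrix l ((1 / sqrt a) *\<^sub>R (W1 ** transpose W2))"

text \<open>A design in indeterminates x_1..x_u is given symbolically: entry (c, v) stands for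
  c * x_v with c in {-1,0,1} and v in {1..u}.  Evaluation at a real assignment x.\<close>
type_synonym ('n) design = "(int \<times> nat)^'n^'n"

definition design_entries_ok :: "nat \<Rightarrow> ('n::finite) design \<Rightarrow> bool" where
  "design_entries_ok u D \<longleftrightarrow> (\<forall>i j. fst (D $ i $ j) \<in> {-1, 0, 1} \<and> snd (D $ i $ j) \<in> {1..u})"

definition eval_design :: "(nat \<Rightarrow> real) \<Rightarrow> ('n::finite) design \<Rightarrow> real^'n^'n" where
  "eval_design x D = (\<chi> i j. of_int (fst (D $ i $ j)) * x (snd (D $ i $ j)))"

definition design_form :: "nat \<Rightarrow> (nat \<Rightarrow> nat) \<Rightarrow> (nat \<Rightarrow> real) \<Rightarrow> real" where
  "design_form u s x = (\<Sum>i=1..u. real (s i) * (x i)\<^sup>2)"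

text \<open>Orthogonal design of type (s_1,...,s_u) (s_i positive integers):
  D D^T = (s_1 x_1^2 + ... + s_u x_u^2) I as an identity in the commuting real
  indeterminates, i.e. for all real values of x.\<close>
definition orthogonal_design :: "nat \<Rightarrow> (nat \<Rightarrow> nat) \<Rightarrow> ('n::finite) design \<Rightarrow> bool" where
  "orthogonal_design u s D \<longleftrightarrow> design_entries_ok u D \<and> (\<forall>i\<in>{1..u}. s i > 0) \<and>
     (\<forall>x. eval_design x D ** transpose (eval_design x D) = design_form u s x *\<^sub>R mat 1)"

definition unbiased_designs :: "nat \<Rightarrow> (nat \<Rightarrow> nat) \<Rightarrow> real \<Rightarrow> ('n::finite) design \<Rightarrow> ('n::finite) design \<Rightarrow> bool" where
  "unbiased_designs u s \<alpha> D1 D2 \<longleftrightarrow> \<alpha> > 0 \<and>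
     (\<exists>W :: real^'n^'n. pm_matrix W \<and>
        (\<forall>x. eval_design x D1 ** transpose (eval_design x D2)
              = (design_form u s x / sqrt \<alpha>) *\<^sub>R W))"

end

theory Submission
  imports Defs
begin

text \<open>Specialising all indeterminates of an orthogonal design to 0 or 1 turns it into a
  weighing matrix, whose weight is the sum of the \<open>s\<^sub>i\<close> of the variables set to 1.
  Doing this in both unbiased designs gives weighing matrices \<open>W\<^sub>1, W\<^sub>2\<close> of weight
  \<open>k = \<Sum>\<^sub>i\<^sub>\<in>\<^sub>S s\<^sub>i\<close> with \<open>W\<^sub>1 W\<^sub>2\<^sup>T = (k/\<surd>\<alpha>) W\<close> for a \<open>(0,\<plusminus>1)\<close>-matrix \<open>W\<close>.
  Since \<open>W\<^sub>2\<^sup>T W\<^sub>2 = k I\<close> as well, \<open>W\<^sub>1 W\<^sub>2\<^sup>T\<close> has Gram matrix \<open>k\<^sup>2 I\<close>, so \<open>W W\<^sup>T = \<alpha> I\<close>.\<close>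

lemma transpose_mult_self_eq_scaleR_mat:
  fixes A :: "real^'n^'n"
  assumes "A ** transpose A = k *\<^sub>R mat 1" and "k \<noteq> 0"
  shows "transpose A ** A = k *\<^sub>R mat 1"
proof -
  have "A ** ((1 / k) *\<^sub>R transpose A) = mat 1"
    using assms by (simp add: matrix_scalar_ac scalar_matrix_assoc[symmetric])
  then have "((1 / k) *\<^sub>R transpose A) ** A = mat 1"
    using matrix_left_right_inverse by blast
  then have "(1 / k) *\<^sub>R (transpose A ** A) = mat 1"
    by (simp add: scalar_matrix_assoc[symmetric])
  then have "k *\<^sub>R ((1 / k) *\<^sub>R (transpose A ** A)) = k *\<^sub>R mat 1"
    by simp
  then show ?thesis
    using assms(2) by simp
qed

lemma mult_transpose_gram:
  fixes A B :: "real^'n^'n"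
  assumes "A ** transpose A = k *\<^sub>R mat 1" and "B ** transpose B = k *\<^sub>R mat 1"
    and "k \<noteq> 0"
  shows "(A ** transpose B) ** transpose (A ** transpose B) = k\<^sup>2 *\<^sub>R mat 1"
proof -
  have "(A ** transpose B) ** transpose (A ** transpose B) = A ** (transpose B ** B) ** transpose A"
    by (simp add: matrix_transpose_mul matrix_mul_assoc)
  also have "\<dots> = k *\<^sub>R (A ** transpose A)"
    using transpose_mult_self_eq_scaleR_mat[OF assms(2,3)]
    by (simp add: matrix_scalar_ac scalar_matrix_assoc[symmetric])
  finally show ?thesis
    using assms(1) by (simp add: power2_eq_square)
qed

lemma weighing_matrix_mult_transpose_rescaled:
  fixes W1 W2 W :: "real^'n^'n"
  assumes "weighing_matrix k W1" and "weighing_matrix k W2"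
    and "pm_matrix W" and "W1 ** transpose W2 = (k / sqrt a) *\<^sub>R W"
    and "k > 0" and "a > 0"
  shows "weighing_matrix a W"
proof -
  let ?c = "k / sqrt a"
  have "?c\<^sup>2 *\<^sub>R (W ** transpose W) = k\<^sup>2 *\<^sub>R mat 1"
    using mult_transpose_gram[of W1 k W2] assms
    by (simp add: weighing_matrix_def transpose_scalar matrix_scalar_ac
        scalar_matrix_assoc[symmetric] power2_eq_square)
  moreover have "?c\<^sup>2 = k\<^sup>2 / a"
    using assms(6) by (simp add: power_divide)
  ultimately have "(a / k\<^sup>2) *\<^sub>R ((k\<^sup>2 / a) *\<^sub>R (W ** transpose W))
      = (a / k\<^sup>2) *\<^sub>R (k\<^sup>2 *\<^sub>R mat 1)"
    by simp
  then have "W ** transpose W = a *\<^sub>R mat 1"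
    using assms(5,6) by simp
  with assms(3) show ?thesis
    by (simp add: weighing_matrix_def)
qed

lemma quasi_unbiasedI:
  fixes W1 W2 W :: "real^'n^'n"
  assumes "weighing_matrix k W1" and "weighing_matrix k W2"
    and "pm_matrix W" and "W1 ** transpose W2 = (k / sqrt a) *\<^sub>R W"
    and "k > 0" and "a > 0"
  shows "quasi_unbiased k a (k\<^sup>2 / a) W1 W2"
proof -
  have "sqrt (k\<^sup>2 / a) = k / sqrt a"
    using assms(5) by (simp add: real_sqrt_divide)
  then have "(1 / sqrt (k\<^sup>2 / a)) *\<^sub>R (W1 ** transpose W2) = W"
    using assms(4-6) by simp
  then show ?thesis
    using weighing_matrix_mult_transpose_rescaled[OF assms] assms(1,2)
    by (simp add: quasi_unbiased_def)
qed

lemma pm_matrix_eval_design: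
  assumes "design_entries_ok u D" and "\<And>v. x v \<in> {0, 1, -1}"
  shows "pm_matrix (eval_design x D)"
  unfolding pm_matrix_def
proof (intro allI)
  fix i j
  have "fst (D $ i $ j) \<in> {-1, 0, 1}"
    using assms(1) by (simp add: design_entries_ok_def)
  moreover have "x (snd (D $ i $ j)) \<in> {0, 1, -1}"
    using assms(2) .
  ultimately show "eval_design x D $ i $ j \<in> {0, 1, -1}"
    by (auto simp: eval_design_def)
qed

lemma weighing_matrix_eval_orthogonal_design:
  assumes "orthogonal_design u s D" and "\<And>v. x v \<in> {0, 1, -1}"
  shows "weighing_matrix (design_form u s x) (eval_design x D)"
  using assms pm_matrix_eval_design[of u D x]
  by (simp add: orthogonal_design_def weighing_matrix_def)

lemma design_form_indicator:
  assumes "S \<subseteq> {1..u}"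
  shows "design_form u s (indicator S) = real (\<Sum>i\<in>S. s i)"
proof -
  have "design_form u s (indicator S) = (\<Sum>i\<in>{1..u}. if i \<in> S then real (s i) else 0)"
    unfolding design_form_def by (intro sum.cong) (auto simp: indicator_def)
  also have "\<dots> = (\<Sum>i\<in>{1..u} \<inter> S. real (s i))"
    by (simp add: sum.inter_restrict)
  also have "{1..u} \<inter> S = S"
    using assms by blast
  finally show ?thesis
    by simp
qed

lemma orthogonal_design_weight_pos:
  assumes "orthogonal_design u s D" and "S \<subseteq> {1..u}" and "S \<noteq> {}"
  shows "(\<Sum>i\<in>S. s i) > 0"
proof -
  obtain i where "i \<in> S"
    using assms(3) by blast
  moreover have "finite S"
    using assms(2) finite_subset by blast
  moreover have "s i > 0"
    using assms(1,2) \<open>i \<in> S\<close> by (auto simp: orthogonal_design_def)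
  ultimately show ?thesis
    by (metis gr0I sum_eq_0_iff)
qed

theorem proposition3p3:
  fixes D1 D2 :: "'n::finite design" and u :: nat and s :: "nat \<Rightarrow> nat"
    and \<alpha> :: real and S :: "nat set"
  assumes "orthogonal_design u s D1" and "orthogonal_design u s D2"
    and "unbiased_designs u s \<alpha> D1 D2"
    and "S \<subseteq> {1..u}" and "S \<noteq> {}"
  shows "\<exists>W1 W2 :: real^'n^'n.
           quasi_unbiased (real (\<Sum>i\<in>S. s i)) \<alpha> ((real (\<Sum>i\<in>S. s i))\<^sup>2 / \<alpha>) W1 W2"
proof -
  let ?x = "indicator S :: nat \<Rightarrow> real"
  let ?k = "real (\<Sum>i\<in>S. s i)"
  have form: "design_form u s ?x = ?k"
    using assms(4) by (rule design_form_indicator)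
  have x01: "\<And>v. ?x v \<in> {0, 1, -1}"
    by (simp add: indicator_def)
  obtain W where "pm_matrix W"
    and "eval_design ?x D1 ** transpose (eval_design ?x D2) = (?k / sqrt \<alpha>) *\<^sub>R W"
    using assms(3) form unfolding unbiased_designs_def by metis
  moreover have "weighing_matrix ?k (eval_design ?x D1)" "weighing_matrix ?k (eval_design ?x D2)"
    using weighing_matrix_eval_orthogonal_design[of u s _ ?x, OF assms(1) x01]
      weighing_matrix_eval_orthogonal_design[of u s _ ?x, OF assms(2) x01]
    unfolding form by simp_all
  moreover have "?k > 0"
    using orthogonal_design_weight_pos[OF assms(1,4,5)] by (simp only: of_nat_0_less_iff)
  moreover have "\<alpha> > 0"
    using assms(3) by (simp add: unbiased_designs_def)
  ultimately show ?thesis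
    using quasi_unbiasedI by blast
qed

end
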